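(* Let $z_i\in\mathbb{C}$, $r_i\ge1$, and let $P_i$ be a polynomial of degree $s_i<r_i$, written $P_i(z)=\sum_{j=0}^{s_i}a_{i,r_i-j}(z-z_i)^j$ with $a_{i,r_i}\ne0$. Put $Q_i=P_i(z)/(z-z_i)^{r_i}$. Then for every $n\ge0$, $$Q_i^{(n)}(z)=\frac{(-1)^n(r_i)_n\,a_{i,r_i}}{(z-z_i)^{r_i+n}}\big(1+S_i^n(z)\big),$$ where $S_i^n$ is a polynomial and $S_i^n\to0$ uniformly on compact subsets of $\mathbb{C}$ as $n\to\infty$.
   Context: $(j)_n=j(j+1)\cdots(j+n-1)$ is the ascending Pochhammer symbol. *)

theory Defs
  imports "HOL-Analysis.Analysis" "HOL-Computational_Algebra.Polynomial"
begin

end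

theory Submission
  imports Defs "HOL-Real_Asymp.Real_Asymp"
begin

text \<open>
  Expanding \<open>P\<close> around \<open>z\<^sub>0\<close> writes \<open>Q\<close> as a finite sum of terms \<open>a\<^sub>k / (z - z\<^sub>0)\<^sup>k\<close> with
  \<open>r - s \<le> k \<le> r\<close>, and the \<open>n\<close>-th derivative of such a term is
  \<open>(-1)\<^sup>n (k)\<^sub>n a\<^sub>k / (z - z\<^sub>0)\<^sup>k\<^sup>+\<^sup>n\<close>. Factoring out the term with \<open>k = r\<close> leaves \<open>1\<close> plus a
  polynomial in \<open>z - z\<^sub>0\<close> whose coefficients carry the factors \<open>(k)\<^sub>n / (r)\<^sub>n \<le> k / (k + n)\<close>
  with \<open>k < r\<close>; these tend to \<open>0\<close>, uniformly on bounded sets since the degree stays \<open>\<le> s\<close>.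
\<close>

lemma pochhammer_nat_mono: "k \<le> m \<Longrightarrow> pochhammer (k::nat) n \<le> pochhammer m n"
  by (induction n) (auto simp: pochhammer_rec' intro!: mult_le_mono)

lemma pochhammer_ratio_le:
  assumes "1 \<le> k" "k < r"
  shows "real (pochhammer k n) / real (pochhammer r n) \<le> real k / real (k + n)"
proof -
  have shift: "real k * real (pochhammer (k + 1) n) = real (pochhammer k n) * real (k + n)"
    by (metis pochhammer_rec pochhammer_rec' mult.commute of_nat_id of_nat_mult)
  have pos: "0 < pochhammer (k + 1) n" "0 < pochhammer r n"
    using assms by (auto intro: pochhammer_pos)
  have "real (pochhammer k n) / real (pochhammer r n)
          \<le> real (pochhammer k n) / real (pochhammer (k + 1) n)"
    using pos assms by (intro divide_left_mono) (auto intro: pochhammer_nat_mono)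
  also have "\<dots> = real k / real (k + n)"
    using shift pos assms by (simp add: field_simps)
  finally show ?thesis .
qed

lemma pochhammer_ratio_tendsto_zero:
  assumes "1 \<le> k" "k < r"
  shows "(\<lambda>n. real (pochhammer k n) / real (pochhammer r n)) \<longlonglongrightarrow> 0"
proof (rule Lim_null_comparison)
  show "\<forall>\<^sub>F n in sequentially.
          norm (real (pochhammer k n) / real (pochhammer r n)) \<le> real k / real (k + n)"
    using pochhammer_ratio_le[OF assms] by simp
  show "(\<lambda>n. real k / real (k + n)) \<longlonglongrightarrow> 0"
    by real_asymp
qed

lemma has_field_derivative_inverse_power:
  fixes z z0 c :: "'a::real_normed_field"
  assumes "z \<noteq> z0"
  shows "((\<lambda>z. c / (z - z0) ^ m) has_field_derivative - of_nat m * c / (z - z0) ^ Suc m) (at z)"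
proof -
  have "((\<lambda>z. c / (z - z0) ^ m) has_field_derivative
          - (c * (of_nat m * (z - z0) ^ (m - 1) * 1)) / ((z - z0) ^ m * (z - z0) ^ m)) (at z)"
    using assms by (auto intro!: derivative_eq_intros)
  also have "- (c * (of_nat m * (z - z0) ^ (m - 1) * 1)) / ((z - z0) ^ m * (z - z0) ^ m)
               = - of_nat m * c / (z - z0) ^ Suc m"
  proof (cases m)
    case (Suc k)
    have "- (c * (of_nat m * w ^ (m - 1) * 1)) / (w ^ m * w ^ m) = - of_nat m * c / w ^ Suc m"
      if "w \<noteq> 0" for w :: 'a
    proof -
      have "w ^ m * w ^ m = w ^ k * w ^ Suc m"
        using Suc by (simp flip: power_add)
      with Suc that show ?thesis
        by (simp add: field_simps)
    qed
    from this[of "z - z0"] assms show ?thesis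
      by simp
  qed simp
  finally show ?thesis .
qed

lemma higher_deriv_sum_inverse_powers:
  fixes z z0 :: "'a::real_normed_field" and c :: "'i \<Rightarrow> 'a"
  assumes "z \<noteq> z0"
  shows "(deriv ^^ n) (\<lambda>z. \<Sum>j\<in>J. c j / (z - z0) ^ m j) z
           = (\<Sum>j\<in>J. (-1) ^ n * pochhammer (of_nat (m j)) n * c j / (z - z0) ^ (m j + n))"
  using assms
proof (induction n arbitrary: z)
  case 0
  then show ?case by simp
next
  case (Suc n)
  let ?D = "\<lambda>n z. \<Sum>j\<in>J. (-1) ^ n * pochhammer (of_nat (m j)) n * c j / (z - z0) ^ (m j + n)"
  have "\<forall>\<^sub>F w in nhds z. (deriv ^^ n) (\<lambda>z. \<Sum>j\<in>J. c j / (z - z0) ^ m j) w = ?D n w"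
    using t1_space_nhds[OF Suc.prems] by eventually_elim (use Suc.IH in auto)
  then have "(deriv ^^ Suc n) (\<lambda>z. \<Sum>j\<in>J. c j / (z - z0) ^ m j) z = deriv (?D n) z"
    by (simp add: deriv_cong_ev)
  also have "\<dots> = ?D (Suc n) z"
  proof (rule DERIV_imp_deriv)
    have "(?D n has_field_derivative (\<Sum>j\<in>J. - of_nat (m j + n)
            * ((-1) ^ n * pochhammer (of_nat (m j)) n * c j) / (z - z0) ^ Suc (m j + n))) (at z)"
      by (intro DERIV_sum has_field_derivative_inverse_power Suc.prems)
    also have "(\<Sum>j\<in>J. - of_nat (m j + n)
                 * ((-1) ^ n * pochhammer (of_nat (m j)) n * c j) / (z - z0) ^ Suc (m j + n))
               = ?D (Suc n) z"
      by (intro sum.cong refl) (simp add: pochhammer_rec' field_simps)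
    finally show "(?D n has_field_derivative ?D (Suc n) z) (at z)" .
  qed
  finally show ?case .
qed

text \<open>This holds at \<open>w = 0\<close> too, both sides being \<open>0\<close> since \<open>x / 0 = 0\<close>; hence \<open>Q\<close> can be
  rewritten as a sum of inverse powers on all of \<open>\<complex>\<close>, not just off the pole.\<close>

lemma sum_powers_divide_power:
  fixes w :: "'a::field"
  assumes "s < r"
  shows "(\<Sum>j\<le>s. b j * w ^ j) / w ^ r = (\<Sum>j\<le>s. b j / w ^ (r - j))"
  unfolding sum_divide_distrib
proof (rule sum.cong)
  fix j
  assume "j \<in> {..s}"
  with assms have power_split: "w ^ r = w ^ j * w ^ (r - j)" and "r - j \<noteq> 0"
    by (simp_all flip: power_add)
  show "b j * w ^ j / w ^ r = b j / w ^ (r - j)"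
  proof (cases "w = 0")
    case True
    with \<open>r - j \<noteq> 0\<close> assms show ?thesis
      by (simp add: power_0_left)
  next
    case False
    then show ?thesis
      unfolding power_split by (simp add: field_simps)
  qed
qed simp

lemma sum_inverse_powers_factor_leading:
  fixes w :: "'a::field"
  assumes "w \<noteq> 0" "d 0 \<noteq> 0" "s \<le> N"
  shows "(\<Sum>j\<le>s. d j / w ^ (N - j)) = d 0 / w ^ N * (1 + (\<Sum>j\<in>{1..s}. d j / d 0 * w ^ j))"
proof -
  have summand: "d j / w ^ (N - j) = d 0 / w ^ N * (d j / d 0 * w ^ j)" if "j \<le> s" for j
  proof -
    have "w ^ N = w ^ (N - j) * w ^ j"
      using that assms(3) by (simp flip: power_add)
    then show ?thesis
      using assms(1,2) by (simp add: field_simps)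
  qed
  have "(\<Sum>j\<le>s. d j / w ^ (N - j)) = (\<Sum>j\<le>s. d 0 / w ^ N * (d j / d 0 * w ^ j))"
    by (rule sum.cong) (auto simp: summand)
  also have "\<dots> = d 0 / w ^ N * (\<Sum>j\<le>s. d j / d 0 * w ^ j)"
    by (simp add: sum_distrib_left)
  also have "(\<Sum>j\<le>s. d j / d 0 * w ^ j) = 1 + (\<Sum>j\<in>{1..s}. d j / d 0 * w ^ j)"
    using assms(2) by (simp add: atMost_atLeast0 sum.atLeast_Suc_atMost)
  finally show ?thesis .
qed

lemma uniform_limit_sum_powers_null:
  fixes c :: "nat \<Rightarrow> nat \<Rightarrow> 'a::real_normed_field"
  assumes "compact K" and coeffs: "\<And>j. j \<in> J \<Longrightarrow> (\<lambda>n. c j n) \<longlonglongrightarrow> 0"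
  shows "uniform_limit K (\<lambda>n z. \<Sum>j\<in>J. c j n * (z - z0) ^ j) (\<lambda>_. 0) sequentially"
proof -
  obtain B where "\<forall>z\<in>K. dist z0 z \<le> B"
    using compact_imp_bounded[OF \<open>compact K\<close>] bounded_any_center by blast
  then have B: "norm (z - z0) \<le> B" if "z \<in> K" for z
    using that by (metis dist_commute dist_norm)
  define M where "M n = (\<Sum>j\<in>J. norm (c j n) * B ^ j)" for n
  have bound: "norm (\<Sum>j\<in>J. c j n * (z - z0) ^ j) \<le> M n" if "z \<in> K" for n z
  proof -
    have "norm (\<Sum>j\<in>J. c j n * (z - z0) ^ j) \<le> (\<Sum>j\<in>J. norm (c j n * (z - z0) ^ j))"
      by (rule norm_sum)
    also have "\<dots> \<le> M n"
      unfolding M_def using B[OF that]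
      by (intro sum_mono) (auto simp: norm_mult norm_power intro!: mult_left_mono power_mono)
    finally show ?thesis .
  qed
  have "M \<longlonglongrightarrow> 0"
    unfolding M_def by (intro tendsto_null_sum tendsto_mult_left_zero tendsto_norm_zero coeffs)
  have M_uniform: "uniform_limit K (\<lambda>n z. M n) (\<lambda>_. 0) sequentially"
  proof (rule uniform_limitI)
    fix e :: real
    assume "0 < e"
    with \<open>M \<longlonglongrightarrow> 0\<close> have "\<forall>\<^sub>F n in sequentially. dist (M n) 0 < e"
      by (rule tendstoD)
    then show "\<forall>\<^sub>F n in sequentially. \<forall>z\<in>K. dist (M n) 0 < e"
      by simp
  qed
  have "\<forall>\<^sub>F n in sequentially. \<forall>z\<in>K. norm (\<Sum>j\<in>J. c j n * (z - z0) ^ j) \<le> M n"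
    using bound by (simp add: always_eventually)
  from this M_uniform show ?thesis
    by (rule uniform_limit_null_comparison)
qed

theorem lemma4p1:
  fixes z0 :: complex and r s :: nat and P :: "complex poly" and a :: "nat \<Rightarrow> complex"
    and Q :: "complex \<Rightarrow> complex"
  assumes r_ge: "r \<ge> 1"
    and deg: "degree P = s" and s_lt: "s < r"
    and P_expand: "\<And>z. poly P z = (\<Sum>j\<le>s. a (r - j) * (z - z0) ^ j)"
    and a_nz: "a r \<noteq> 0"
    and Q_def: "\<And>z. Q z = poly P z / (z - z0) ^ r"
  shows "\<exists>S :: nat \<Rightarrow> complex poly.
           (\<forall>n. \<forall>z. z \<noteq> z0 \<longrightarrow>
              (deriv ^^ n) Q z
                = (-1) ^ n * pochhammer (of_nat r) n * a r / (z - z0) ^ (r + n)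
                  * (1 + poly (S n) z))
         \<and> (\<forall>K. compact K \<longrightarrow>
              uniform_limit K (\<lambda>n z. poly (S n) z) (\<lambda>z. 0) sequentially)"
proof -
  define d where "d n j = (-1) ^ n * pochhammer (of_nat (r - j)) n * a (r - j)" for n j
  define S where "S n = (\<Sum>j\<in>{1..s}. smult (d n j / d n 0) ([:-z0, 1:] ^ j))" for n
  have poly_S: "poly (S n) z = (\<Sum>j\<in>{1..s}. d n j / d n 0 * (z - z0) ^ j)" for n z
    by (simp add: S_def poly_sum)
  have d_leading_nonzero: "d n 0 \<noteq> 0" for n
  proof -
    have "0 < pochhammer r n"
      using r_ge by (intro pochhammer_pos) auto
    then have "pochhammer (of_nat r) n \<noteq> (0::complex)"
      by (simp add: pochhammer_of_nat)
    with a_nz show ?thesis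
      by (simp add: d_def)
  qed
  have Q_partial_fractions: "Q = (\<lambda>z. \<Sum>j\<le>s. a (r - j) / (z - z0) ^ (r - j))"
    using s_lt by (simp add: fun_eq_iff Q_def P_expand sum_powers_divide_power)
  have "(deriv ^^ n) Q z = (-1) ^ n * pochhammer (of_nat r) n * a r / (z - z0) ^ (r + n)
                             * (1 + poly (S n) z)" if "z \<noteq> z0" for n z
  proof -
    have "(deriv ^^ n) Q z = (\<Sum>j\<le>s. d n j / (z - z0) ^ (r + n - j))"
      unfolding Q_partial_fractions higher_deriv_sum_inverse_powers[OF that]
      using s_lt by (intro sum.cong refl) (simp add: d_def add_diff_assoc2)
    also have "\<dots> = d n 0 / (z - z0) ^ (r + n) * (1 + poly (S n) z)"
      using that s_lt d_leading_nonzero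
      by (simp add: poly_S sum_inverse_powers_factor_leading)
    finally show ?thesis
      by (simp add: d_def)
  qed
  moreover have "uniform_limit K (\<lambda>n z. poly (S n) z) (\<lambda>z. 0) sequentially" if "compact K" for K
  proof -
    have "(\<lambda>n. d n j / d n 0) \<longlonglongrightarrow> 0" if "j \<in> {1..s}" for j
    proof -
      have norm_coeff: "norm (d n j / d n 0)
              = norm (a (r - j) / a r) * (real (pochhammer (r - j) n) / real (pochhammer r n))" for n
        by (simp add: d_def pochhammer_of_nat norm_mult norm_divide norm_power mult_ac)
      have "(\<lambda>n. real (pochhammer (r - j) n) / real (pochhammer r n)) \<longlonglongrightarrow> 0"
        using that s_lt by (intro pochhammer_ratio_tendsto_zero) auto
      then have "(\<lambda>n. norm (d n j / d n 0)) \<longlonglongrightarrow> 0"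
        unfolding norm_coeff by (rule tendsto_mult_right_zero)
      then show ?thesis
        by (rule tendsto_norm_zero_cancel)
    qed
    with \<open>compact K\<close> show ?thesis
      unfolding poly_S by (rule uniform_limit_sum_powers_null)
  qed
  ultimately show ?thesis
    by blast
qed
end
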